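(* Let $w>0$ and $\rho\in\mathcal R_w$ with $t_1\le t_2$ as in the definition of $\mathcal R_w$, $t_2>0$, and let $H_t$ be the stepping-out and shrinkage kernel. Then (1) for every $t\in[0,\|\rho\|_\infty]$, $H_t$ is positive semi-definite on $L_2(K(t),U_t)$, i.e. $\int (H_tf)f\,\mathrm dU_t\ge0$; and (2) for every $k\in\mathbb N$, \[ \beta_k=\Big(\frac1{t_2}\int_0^{t_2}\Big[1-\frac{w-\delta_t}{w}\cdot\frac{|K(t)|}{|K(t)|+\delta_t}\Big]^{2k}\mathrm dt\Big)^{1/2}. \]
   Context: Let $\rho:\mathbb R\to[0,\infty)$ with $0<\int\rho<\infty$, $K(t)=\{x:\rho(x)\ge t\}$, $|K(t)|$ its Lebesgue measure (assumed in $(0,\infty)$ for $t\in(0,\|\rho\|_\infty)$), $U_t$ uniform on $K(t)$. For $w>0$, $\rho\in\mathcal R_w$ means: there exist $t_1\le t_2$ in $[0,\|\rho\|_\infty]$ such that (a) for $t\in[0,t_1]\cup(t_2,\|\rho\|_\infty]$, $K(t)$ is an interval; (b) for $t\in(t_1,t_2]$ there are disjoint intervals $K_1(t),K_2(t)$ with $K(t)=K_1(t)\cup K_2(t)$ and $K_i(t+\varepsilon)\subseteq K_i(t)$ for $\varepsilon>0$; (c) $\delta_t<w$ for all $t$, where $\delta_t=\inf_{r\in K_1(t),s\in K_2(t)}|r-s|$ for $t\in(t_1,t_2]$ and $\delta_t=0$ otherwise. The stepping-out and shrinkage kernel on $K(t)$ is \[ H_t(x,A)=\gamma_tU_t(A)+(1-\gamma_t)\big[\mathbf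 1_{K_1(t)}(x)U_{t,1}(A)+\mathbf 1_{K_2(t)}(x)U_{t,2}(A)\big],\quad \gamma_t=\frac{w-\delta_t}{w}\cdot\frac{|K(t)|}{|K(t)|+\delta_t}, \] where $U_{t,i}$ is uniform on $K_i(t)$ (for $t\notin(t_1,t_2]$, $\gamma_t=1$ and $H_t=U_t$). With $L_{2,t}=L_2(K(t),U_t)$ and $U_t$ acting as $f\mapsto\int f\,\mathrm dU_t$, define $\beta_k=\sup_{x\in\mathbb R}\big(\int_0^{\rho(x)}\|H_t^k-U_t\|^2_{L_{2,t}\to L_{2,t}}\,\mathrm dt/\rho(x)\big)^{1/2}$. *)

theory Defs
  imports "HOL-Analysis.Analysis"
begin

definition lvl :: "(real \<Rightarrow> real) \<Rightarrow> real \<Rightarrow> real set" where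
  "lvl \<rho> t = {x. t \<le> \<rho> x}"

definition rho_max :: "(real \<Rightarrow> real) \<Rightarrow> real" where
  "rho_max \<rho> = Sup (range \<rho>)"

definition unif :: "real set \<Rightarrow> real measure" where
  "unif A = uniform_measure lborel A"

definition gap :: "real set \<Rightarrow> real set \<Rightarrow> real" where
  "gap A B = Inf {\<bar>r - s\<bar> | r s. r \<in> A \<and> s \<in> B}"

definition delta :: "real \<Rightarrow> real \<Rightarrow> (real \<Rightarrow> real set) \<Rightarrow> (real \<Rightarrow> real set) \<Rightarrow> real \<Rightarrow> real" where
  "delta t1 t2 K1 K2 t = (if t \<in> {t1<..t2} then gap (K1 t) (K2 t) else 0)"

text \<open>Membership of rho in R_w, witnessed by t1, t2, K1, K2.\<close>
definition in_Rw :: "real \<Rightarrow> (real \<Rightarrow> real) \<Rightarrow> real \<Rightarrow> real \<Rightarrow>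
    (real \<Rightarrow> real set) \<Rightarrow> (real \<Rightarrow> real set) \<Rightarrow> bool" where
  "in_Rw w \<rho> t1 t2 K1 K2 \<longleftrightarrow>
     0 \<le> t1 \<and> t1 \<le> t2 \<and> t2 \<le> rho_max \<rho> \<and>
     (\<forall>t \<in> {0..t1} \<union> {t2<..rho_max \<rho>}. is_interval (lvl \<rho> t)) \<and>
     (\<forall>t \<in> {t1<..t2}. is_interval (K1 t) \<and> is_interval (K2 t) \<and>
         K1 t \<noteq> {} \<and> K2 t \<noteq> {} \<and>
         K1 t \<inter> K2 t = {} \<and> lvl \<rho> t = K1 t \<union> K2 t) \<and>
     (\<forall>t \<in> {t1<..t2}. \<forall>\<epsilon>>0. t + \<epsilon> \<in> {t1<..t2} \<longrightarrow>
         K1 (t + \<epsilon>) \<subseteq> K1 t \<and> K2 (t + \<epsilon>) \<subseteq> K2 t) \<and>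
     (\<forall>t. delta t1 t2 K1 K2 t < w)"

definition gamma :: "real \<Rightarrow> (real \<Rightarrow> real) \<Rightarrow> real \<Rightarrow> real \<Rightarrow>
    (real \<Rightarrow> real set) \<Rightarrow> (real \<Rightarrow> real set) \<Rightarrow> real \<Rightarrow> real" where
  "gamma w \<rho> t1 t2 K1 K2 t =
     (if t \<in> {t1<..t2} then
        (w - delta t1 t2 K1 K2 t) / w *
        (measure lborel (lvl \<rho> t) / (measure lborel (lvl \<rho> t) + delta t1 t2 K1 K2 t))
      else 1)"

text \<open>The stepping-out and shrinkage kernel H_t acting on functions:
  (H_t f)(x) = integral of f w.r.t. the probability measure H_t(x, .).\<close>
definition Hop :: "real \<Rightarrow> (real \<Rightarrow> real) \<Rightarrow> real \<Rightarrow> real \<Rightarrow>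
    (real \<Rightarrow> real set) \<Rightarrow> (real \<Rightarrow> real set) \<Rightarrow> real \<Rightarrow> (real \<Rightarrow> real) \<Rightarrow> (real \<Rightarrow> real)" where
  "Hop w \<rho> t1 t2 K1 K2 t f x =
     (if t \<in> {t1<..t2} then
        gamma w \<rho> t1 t2 K1 K2 t * (\<integral>y. f y \<partial>unif (lvl \<rho> t)) +
        (1 - gamma w \<rho> t1 t2 K1 K2 t) *
          (indicator (K1 t) x * (\<integral>y. f y \<partial>unif (K1 t)) +
           indicator (K2 t) x * (\<integral>y. f y \<partial>unif (K2 t)))
      else (\<integral>y. f y \<partial>unif (lvl \<rho> t)))"

text \<open>Membership in L_2(K(t), U_t) (functions given on all of R; only values on K(t) matter).\<close>
definition L2 :: "real measure \<Rightarrow> (real \<Rightarrow> real) \<Rightarrow> bool" where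
  "L2 \<mu> f \<longleftrightarrow> f \<in> borel_measurable lborel \<and> integrable \<mu> (\<lambda>x. (f x)\<^sup>2)"

definition l2norm :: "real measure \<Rightarrow> (real \<Rightarrow> real) \<Rightarrow> real" where
  "l2norm \<mu> f = sqrt (\<integral>x. (f x)\<^sup>2 \<partial>\<mu>)"

text \<open>Operator norm of H_t^k - U_t on L_2(K(t),U_t), where U_t f = integral of f w.r.t. U_t.\<close>
definition opnorm_diff :: "real \<Rightarrow> (real \<Rightarrow> real) \<Rightarrow> real \<Rightarrow> real \<Rightarrow>
    (real \<Rightarrow> real set) \<Rightarrow> (real \<Rightarrow> real set) \<Rightarrow> nat \<Rightarrow> real \<Rightarrow> real" where
  "opnorm_diff w \<rho> t1 t2 K1 K2 k t =
     Sup {l2norm (unif (lvl \<rho> t))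
            (\<lambda>x. ((Hop w \<rho> t1 t2 K1 K2 t) ^^ k) f x - (\<integral>y. f y \<partial>unif (lvl \<rho> t))) | f.
          L2 (unif (lvl \<rho> t)) f \<and> l2norm (unif (lvl \<rho> t)) f \<le> 1}"

definition beta :: "real \<Rightarrow> (real \<Rightarrow> real) \<Rightarrow> real \<Rightarrow> real \<Rightarrow>
    (real \<Rightarrow> real set) \<Rightarrow> (real \<Rightarrow> real set) \<Rightarrow> nat \<Rightarrow> real" where
  "beta w \<rho> t1 t2 K1 K2 k =
     (SUP x. sqrt ((LINT t:{0..\<rho> x}|lborel. (opnorm_diff w \<rho> t1 t2 K1 K2 k t)\<^sup>2) / \<rho> x))"

end

theory Submission
  imports Defs
begin

text \<open>On a level set \<open>K t\<close> with \<open>t \<in> {t1<..t2}\<close> the kernel is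
  \<open>H t = \<gamma> t U t + (1 - \<gamma> t) P t\<close>, where \<open>P t\<close> averages \<open>f\<close> over the piece \<open>K1 t\<close> or
  \<open>K2 t\<close> containing the current point. \<open>P t\<close> and \<open>U t\<close> are commuting orthogonal projections
  with \<open>P t U t = U t\<close>, so \<open>\<langle>H t f, f\<rangle> = \<gamma> t \<parallel>U t f\<parallel>\<^sup>2 + (1 - \<gamma> t) \<parallel>P t f\<parallel>\<^sup>2 \<ge> 0\<close> and
  \<open>H t ^ k - U t = (1 - \<gamma> t) ^ k (P t - U t)\<close> for \<open>k \<ge> 1\<close>; its norm \<open>(1 - \<gamma> t) ^ k\<close> is
  attained by a function that is constant on each piece. Off \<open>{t1<..t2}\<close> the kernel is \<open>U t\<close>.

  Since \<open>\<delta> t\<close> grows and \<open>|K t|\<close> shrinks with \<open>t\<close>, the squared norms \<open>(1 - \<gamma> t) ^ (2 k)\<close>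
  increase on \<open>{t1<..t2}\<close> and vanish elsewhere, so their average over \<open>[0, s]\<close> is largest at
  \<open>s = t2\<close>. The values of \<open>\<rho>\<close> accumulate at \<open>t2\<close> unless these norms vanish altogether
  (otherwise \<open>K t2\<close> is a later level set, hence an interval, and \<open>\<delta> t2 = 0\<close>), so the
  supremum defining \<open>\<beta> k\<close> is this largest average.\<close>

section \<open>Uniform distributions on sets of reals\<close>

abbreviation mean :: "real set \<Rightarrow> (real \<Rightarrow> real) \<Rightarrow> real" where
  "mean A f \<equiv> \<integral>y. f y \<partial>unif A"

lemma sets_lborel_if_emeasure_pos: "0 < emeasure lborel A \<Longrightarrow> A \<in> sets lborel"
  using emeasure_notin_sets by fastforce

lemma measure_pos_if_emeasure_pos:
  assumes "0 < emeasure lborel A" and "emeasure lborel A < \<infinity>"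
  shows "0 < measure lborel A"
  using assms by (simp add: emeasure_eq_ennreal_measure ennreal_less_zero_iff)

lemma unif_eq_density:
  assumes pos: "0 < emeasure lborel A" and fin: "emeasure lborel A < \<infinity>"
  shows "unif A = density lborel (\<lambda>x. ennreal (indicator A x / measure lborel A))"
proof -
  have "indicator A x / emeasure lborel A = ennreal (indicator A x / measure lborel A)" for x
    using fin measure_pos_if_emeasure_pos[OF pos fin]
    by (subst divide_ennreal[symmetric]) (auto simp: emeasure_eq_ennreal_measure ennreal_indicator)
  then show ?thesis unfolding unif_def uniform_measure_def by presburger
qed

lemma integral_unif:
  fixes g :: "real \<Rightarrow> real"
  assumes pos: "0 < emeasure lborel A" and fin: "emeasure lborel A < \<infinity>"
    and g: "g \<in> borel_measurable lborel"
  shows "mean A g = (\<integral>x. indicator A x * g x \<partial>lborel) / measure lborel A"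
proof -
  have "(\<lambda>x. indicator A x / measure lborel A) \<in> borel_measurable lborel"
    using sets_lborel_if_emeasure_pos[OF pos] by measurable
  then have "mean A g = (\<integral>x. indicator A x / measure lborel A * g x \<partial>lborel)"
    unfolding unif_eq_density[OF pos fin] by (subst integral_density[OF g]) auto
  also have "\<dots> = (\<integral>x. indicator A x * g x / measure lborel A \<partial>lborel)"
    by (rule Bochner_Integration.integral_cong) auto
  also have "\<dots> = (\<integral>x. indicator A x * g x \<partial>lborel) / measure lborel A"
    by (rule integral_divide_zero)
  finally show ?thesis .
qed

lemma integral_indicator_mult_eq_mean:
  fixes g :: "real \<Rightarrow> real"
  assumes "0 < emeasure lborel A" and "emeasure lborel A < \<infinity>"
    and "g \<in> borel_measurable lborel"
  shows "(\<integral>x. indicator A x * g x \<partial>lborel) = measure lborel A * mean A g"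
  using integral_unif[OF assms] measure_pos_if_emeasure_pos[OF assms(1,2)] by simp

lemma integrable_unif_iff:
  fixes g :: "real \<Rightarrow> real"
  assumes pos: "0 < emeasure lborel A" and fin: "emeasure lborel A < \<infinity>"
    and g: "g \<in> borel_measurable lborel"
  shows "integrable (unif A) g \<longleftrightarrow> integrable lborel (\<lambda>x. indicator A x * g x)"
proof -
  have "(\<lambda>x. indicator A x / measure lborel A) \<in> borel_measurable lborel"
    using sets_lborel_if_emeasure_pos[OF pos] by measurable
  then have "integrable (unif A) g \<longleftrightarrow>
      integrable lborel (\<lambda>x. (1 / measure lborel A) * (indicator A x * g x))"
    unfolding unif_eq_density[OF pos fin] by (subst integrable_density[OF g]) auto
  then show ?thesis
    using measure_pos_if_emeasure_pos[OF pos fin] by (subst (asm) integrable_mult_left_iff) auto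
qed

lemma integral_unif_const:
  fixes c :: real
  assumes "0 < emeasure lborel A" and "emeasure lborel A < \<infinity>"
  shows "(\<integral>x. c \<partial>unif A) = c"
  using integral_unif[OF assms, of "\<lambda>_. c"] measure_pos_if_emeasure_pos[OF assms]
    sets_lborel_if_emeasure_pos[OF assms(1)] assms(2)
  by (simp add: mult.commute)

lemma finite_measure_unif:
  assumes pos: "0 < emeasure lborel A" and fin: "emeasure lborel A < \<infinity>"
  shows "finite_measure (unif A)"
proof (rule finite_measureI)
  have "emeasure (unif A) (space (unif A)) = 1"
    unfolding unif_def using emeasure_uniform_measure[OF sets_lborel_if_emeasure_pos[OF pos], of UNIV]
      pos fin by simp
  then show "emeasure (unif A) (space (unif A)) \<noteq> \<infinity>" by simp
qed

lemma L2_imp_integrable: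
  assumes pos: "0 < emeasure lborel A" and fin: "emeasure lborel A < \<infinity>"
    and L: "L2 (unif A) f"
  shows "integrable (unif A) f"
proof -
  interpret finite_measure "unif A" by (rule finite_measure_unif[OF pos fin])
  have "f \<in> borel_measurable (unif A)"
    using L unfolding L2_def unif_def uniform_measure_def by simp
  moreover have "integrable (unif A) (\<lambda>x. (f x)\<^sup>2)" using L unfolding L2_def by simp
  ultimately show ?thesis by (rule square_integrable_imp_integrable)
qed

lemma integral_unif_centered_sq:
  assumes pos: "0 < emeasure lborel A" and fin: "emeasure lborel A < \<infinity>"
    and L: "L2 (unif A) f"
  shows "(\<integral>x. (f x - mean A f)\<^sup>2 \<partial>unif A) = (\<integral>x. (f x)\<^sup>2 \<partial>unif A) - (mean A f)\<^sup>2"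
proof -
  interpret finite_measure "unif A" by (rule finite_measure_unif[OF pos fin])
  have fi: "integrable (unif A) f" by (rule L2_imp_integrable[OF pos fin L])
  have prob: "measure (unif A) (space (unif A)) = 1"
    using integral_unif_const[OF pos fin, of 1] by simp
  have f2: "integrable (unif A) (\<lambda>x. (f x)\<^sup>2)" using L unfolding L2_def by auto
  have "(\<integral>x. (f x - mean A f)\<^sup>2 \<partial>unif A)
      = (\<integral>x. (f x)\<^sup>2 - 2 * mean A f * f x + (mean A f)\<^sup>2 \<partial>unif A)"
    by (rule Bochner_Integration.integral_cong) (auto simp: power2_diff)
  also have "\<dots> = (\<integral>x. (f x)\<^sup>2 \<partial>unif A) - 2 * mean A f * mean A f + (mean A f)\<^sup>2"
    using fi f2 prob by simp
  finally show ?thesis by (simp add: power2_eq_square)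
qed

lemma l2norm_centered_le:
  assumes "0 < emeasure lborel A" and "emeasure lborel A < \<infinity>" and "L2 (unif A) f"
  shows "l2norm (unif A) (\<lambda>x. f x - mean A f) \<le> l2norm (unif A) f"
  unfolding l2norm_def integral_unif_centered_sq[OF assms] by simp

lemma mean_sq_le:
  assumes "0 < emeasure lborel A" and "emeasure lborel A < \<infinity>" and "L2 (unif A) f"
  shows "(mean A f)\<^sup>2 \<le> (\<integral>x. (f x)\<^sup>2 \<partial>unif A)"
proof -
  have "0 \<le> (\<integral>x. (f x - mean A f)\<^sup>2 \<partial>unif A)" by (rule integral_nonneg_AE) auto
  then show ?thesis unfolding integral_unif_centered_sq[OF assms] by simp
qed

lemma L2_unif_subset:
  assumes sub: "B \<subseteq> A"
    and posA: "0 < emeasure lborel A" and finA: "emeasure lborel A < \<infinity>"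
    and posB: "0 < emeasure lborel B" and finB: "emeasure lborel B < \<infinity>"
    and L: "L2 (unif A) f"
  shows "L2 (unif B) f"
proof -
  have fm: "f \<in> borel_measurable lborel" using L unfolding L2_def by simp
  have "integrable lborel (\<lambda>x. indicator A x * (f x)\<^sup>2)"
    using L fm integrable_unif_iff[OF posA finA, of "\<lambda>x. (f x)\<^sup>2"] unfolding L2_def by simp
  from integrable_mult_indicator[OF sets_lborel_if_emeasure_pos[OF posB] this]
  have "integrable lborel (\<lambda>x. indicator B x * (indicator A x * (f x)\<^sup>2))" by simp
  moreover have "indicator B x * (indicator A x * (f x)\<^sup>2) = indicator B x * (f x)\<^sup>2" for x
    using sub by (auto split: split_indicator)
  ultimately show ?thesis
    using fm integrable_unif_iff[OF posB finB, of "\<lambda>x. (f x)\<^sup>2"] unfolding L2_def by simp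
qed

section \<open>Gaps and splittings of sets of reals\<close>

lemma gap_nonneg: "A \<noteq> {} \<Longrightarrow> B \<noteq> {} \<Longrightarrow> 0 \<le> gap A B"
  unfolding gap_def by (rule cInf_greatest) auto

lemma gap_le:
  assumes "r \<in> A" "s \<in> B" shows "gap A B \<le> \<bar>r - s\<bar>"
  unfolding gap_def by (rule cInf_lower) (use assms in \<open>auto intro!: bdd_belowI[of _ 0]\<close>)

lemma gap_antimono:
  assumes "A' \<subseteq> A" "B' \<subseteq> B" "A' \<noteq> {}" "B' \<noteq> {}"
  shows "gap A B \<le> gap A' B'"
  unfolding gap_def
  by (rule cInf_superset_mono) (use assms in \<open>auto intro!: bdd_belowI[of _ 0]\<close>)

text \<open>Two sets at positive distance have disjoint open neighbourhoods, which would disconnect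
  the segment between a point of each.\<close>
lemma gap_eq_0_if_interval:
  assumes A: "A \<noteq> {}" and B: "B \<noteq> {}" and I: "is_interval (A \<union> B)"
  shows "gap A B = 0"
proof (rule ccontr)
  define d where "d = gap A B"
  assume "gap A B \<noteq> 0"
  then have d: "0 < d" using gap_nonneg[OF A B] unfolding d_def by simp
  obtain a b where a: "a \<in> A" and b: "b \<in> B" using A B by auto
  define U where "U = (\<Union>r\<in>A. ball r (d/2))"
  define V where "V = (\<Union>s\<in>B. ball s (d/2))"
  define S where "S = {min a b .. max a b}"
  have "connected S" "open U" "open V" unfolding S_def U_def V_def by auto
  moreover have "U \<inter> V \<inter> S = {}"
  proof (rule ccontr)
    assume "U \<inter> V \<inter> S \<noteq> {}"
    then obtain z r s where r: "r \<in> A" and s: "s \<in> B" and "dist r z < d/2" "dist s z < d/2"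
      unfolding U_def V_def by auto
    then have "\<bar>r - s\<bar> < d"
      using abs_triangle_ineq4[of "r - z" "s - z"] unfolding dist_real_def by simp
    with gap_le[OF r s] show False unfolding d_def by simp
  qed
  moreover have "S \<subseteq> U \<union> V"
  proof
    fix z assume "z \<in> S"
    then have "z \<in> A \<union> B"
      using I a b unfolding is_interval_1 S_def by (cases "a \<le> b") (auto simp: min_def max_def)
    then show "z \<in> U \<union> V" unfolding U_def V_def using d by force
  qed
  ultimately have "U \<inter> S = {} \<or> V \<inter> S = {}" by (rule connectedD)
  moreover have "a \<in> U \<inter> S" unfolding U_def S_def using a d by (auto intro!: bexI[of _ a])
  moreover have "b \<in> V \<inter> S" unfolding V_def S_def using b d by (auto intro!: bexI[of _ b])
  ultimately show False by auto
qed

definition pos_fin_split :: "real set \<Rightarrow> real set \<Rightarrow> real set \<Rightarrow> bool" where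
  "pos_fin_split A B1 B2 \<longleftrightarrow> A = B1 \<union> B2 \<and> B1 \<inter> B2 = {} \<and>
     0 < emeasure lborel B1 \<and> emeasure lborel B1 < \<infinity> \<and>
     0 < emeasure lborel B2 \<and> emeasure lborel B2 < \<infinity>"

lemma pos_fin_split_measure:
  assumes "pos_fin_split A B1 B2"
  shows "0 < emeasure lborel A" "emeasure lborel A < \<infinity>"
    "measure lborel A = measure lborel B1 + measure lborel B2"
proof -
  have sets: "B1 \<in> sets lborel" "B2 \<in> sets lborel"
    using assms sets_lborel_if_emeasure_pos unfolding pos_fin_split_def by auto
  have "emeasure lborel A = emeasure lborel B1 + emeasure lborel B2"
    using assms sets unfolding pos_fin_split_def by (auto intro: plus_emeasure[symmetric])
  then show "0 < emeasure lborel A" "emeasure lborel A < \<infinity>"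
    using assms unfolding pos_fin_split_def by (auto simp: add_pos_nonneg)
  show "measure lborel A = measure lborel B1 + measure lborel B2"
    using assms sets unfolding pos_fin_split_def by (auto intro: measure_Union)
qed

lemma interval_pos_fin_split:
  fixes A :: "real set"
  assumes I: "is_interval A" and pos: "0 < emeasure lborel A" and fin: "emeasure lborel A < \<infinity>"
  obtains B1 B2 where "pos_fin_split A B1 B2"
proof -
  have sA: "A \<in> sets lborel" using pos by (rule sets_lborel_if_emeasure_pos)
  have "\<exists>a\<in>A. \<exists>b\<in>A. a < b"
  proof (rule ccontr)
    assume none: "\<not> (\<exists>a\<in>A. \<exists>b\<in>A. a < b)"
    obtain a where a: "a \<in> A" using pos by fastforce
    have "A \<subseteq> {a}"
    proof
      fix y assume "y \<in> A"
      then have "\<not> a < y" "\<not> y < a" using none a by blast+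
      then show "y \<in> {a}" by simp
    qed
    then have "emeasure lborel A \<le> emeasure lborel {a}" by (intro emeasure_mono) auto
    then show False using pos by simp
  qed
  then obtain a b where a: "a \<in> A" and b: "b \<in> A" and ab: "a < b" by blast
  define c where "c = (a + b) / 2"
  define B1 where "B1 = A \<inter> {..<c}"
  define B2 where "B2 = A \<inter> {c..}"
  have sets: "B1 \<in> sets lborel" "B2 \<in> sets lborel" unfolding B1_def B2_def using sA by auto
  have cab: "a < c" "c < b" using ab unfolding c_def by auto
  have inA: "y \<in> A" if "a \<le> y" "y \<le> b" for y
    using I a b that unfolding is_interval_1 by blast
  have sub: "{a..<c} \<subseteq> B1" "{c..b} \<subseteq> B2"
    unfolding B1_def B2_def using inA cab by auto
  have "ennreal (c - a) \<le> emeasure lborel B1" "ennreal (b - c) \<le> emeasure lborel B2"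
    using emeasure_mono[OF sub(1) sets(1)] emeasure_mono[OF sub(2) sets(2)] cab by simp_all
  then have "0 < emeasure lborel B1" "0 < emeasure lborel B2"
    using cab order.strict_trans2[of 0 "ennreal (c - a)"] order.strict_trans2[of 0 "ennreal (b - c)"]
    by auto
  moreover have "emeasure lborel B1 \<le> emeasure lborel A" "emeasure lborel B2 \<le> emeasure lborel A"
    unfolding B1_def B2_def by (rule emeasure_mono[OF _ sA], blast)+
  then have "emeasure lborel B1 < \<infinity>" "emeasure lborel B2 < \<infinity>"
    using fin by (simp_all add: le_less_trans)
  ultimately have "pos_fin_split A B1 B2"
    unfolding pos_fin_split_def B1_def B2_def by auto
  then show ?thesis by (rule that)
qed

lemma split_test_function:
  assumes S: "pos_fin_split A B1 B2"
  obtains f where "L2 (unif A) f" "l2norm (unif A) f = 1" "mean A f = 0"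
    "mean B1 f = sqrt (measure lborel B2) / sqrt (measure lborel B1)"
    "mean B2 f = - (sqrt (measure lborel B1) / sqrt (measure lborel B2))"
proof -
  define a where "a = sqrt (measure lborel B1)"
  define b where "b = sqrt (measure lborel B2)"
  have p1: "0 < emeasure lborel B1" "emeasure lborel B1 < \<infinity>"
    and p2: "0 < emeasure lborel B2" "emeasure lborel B2 < \<infinity>"
    and AB: "A = B1 \<union> B2" "B1 \<inter> B2 = {}" using S unfolding pos_fin_split_def by auto
  note pA = pos_fin_split_measure[OF S]
  note sets[measurable] = sets_lborel_if_emeasure_pos[OF p1(1)] sets_lborel_if_emeasure_pos[OF p2(1)]
  have m1: "measure lborel B1 = a\<^sup>2" "0 < a" and m2: "measure lborel B2 = b\<^sup>2" "0 < b"
    using measure_pos_if_emeasure_pos[OF p1] measure_pos_if_emeasure_pos[OF p2]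
    unfolding a_def b_def by auto
  have i1: "integrable lborel (indicator B1 :: real \<Rightarrow> real)"
    by (rule integrable_real_indicator[OF sets(1) p1(2)])
  have i2: "integrable lborel (indicator B2 :: real \<Rightarrow> real)"
    by (rule integrable_real_indicator[OF sets(2) p2(2)])
  define f where "f = (\<lambda>x. indicator B1 x * (b / a) - indicator B2 x * (a / b))"
  have fm: "f \<in> borel_measurable lborel" unfolding f_def by measurable
  have f_on_A: "indicator A x * f x = indicator B1 x * (b / a) - indicator B2 x * (a / b)"
    and f2_on_A: "indicator A x * (f x)\<^sup>2 = indicator B1 x * (b / a)\<^sup>2 + indicator B2 x * (a / b)\<^sup>2"
    and f_on_B1: "indicator B1 x * f x = indicator B1 x * (b / a)"
    and f_on_B2: "indicator B2 x * f x = - indicator B2 x * (a / b)" for x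
    unfolding f_def AB(1) using AB(2) by (auto split: split_indicator)
  have int_f2: "(\<integral>x. indicator A x * (f x)\<^sup>2 \<partial>lborel) = a\<^sup>2 + b\<^sup>2"
    unfolding f2_on_A using i1 i2 m1 m2 by (simp add: field_simps power2_eq_square)
  have "L2 (unif A) f"
    unfolding L2_def f2_on_A integrable_unif_iff[OF pA(1,2) borel_measurable_power[OF fm]]
    using fm i1 i2 by simp
  moreover have "l2norm (unif A) f = 1"
    unfolding l2norm_def integral_unif[OF pA(1,2) borel_measurable_power[OF fm]] int_f2 pA(3)
    using m1 m2 by simp
  moreover have "mean A f = 0"
    unfolding integral_unif[OF pA(1,2) fm] f_on_A using i1 i2 m1 m2
    by (simp add: field_simps power2_eq_square)
  moreover have "mean B1 f = b / a"
    unfolding integral_unif[OF p1 fm] f_on_B1 using i1 m1 by simp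
  moreover have "mean B2 f = - (a / b)"
    unfolding integral_unif[OF p2 fm] f_on_B2 using i2 m2 by simp
  ultimately show ?thesis using that unfolding a_def b_def by blast
qed

lemma Sup_l2norm_centered:
  assumes S: "pos_fin_split A B1 B2"
  shows "Sup {l2norm (unif A) (\<lambda>x. f x - mean A f) | f.
           L2 (unif A) f \<and> l2norm (unif A) f \<le> 1} = 1"
proof (rule cSup_eq_maximum)
  obtain f where "L2 (unif A) f" "l2norm (unif A) f = 1" "mean A f = 0"
    using split_test_function[OF S] by blast
  then show "1 \<in> {l2norm (unif A) (\<lambda>x. f x - mean A f) | f.
      L2 (unif A) f \<and> l2norm (unif A) f \<le> 1}" by force
next
  fix z assume "z \<in> {l2norm (unif A) (\<lambda>x. f x - mean A f) | f.
      L2 (unif A) f \<and> l2norm (unif A) f \<le> 1}"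
  then show "z \<le> 1"
    using l2norm_centered_le[OF pos_fin_split_measure(1,2)[OF S]] by force
qed

section \<open>Running averages of increasing profiles\<close>

definition running_integral :: "(real \<Rightarrow> real) \<Rightarrow> real \<Rightarrow> real" where
  "running_integral G s = (\<integral>t. indicator {0..s} t * G t \<partial>lborel)"

lemma integrable_indicator_mult_bounded:
  fixes G :: "real \<Rightarrow> real"
  assumes "G \<in> borel_measurable lborel" and "\<And>t. 0 \<le> G t \<and> G t \<le> 1"
    and "S \<in> sets lborel" and "emeasure lborel S < \<infinity>"
  shows "integrable lborel (\<lambda>t. indicator S t * G t)"
proof (rule Bochner_Integration.integrable_bound[of lborel "indicator S :: real \<Rightarrow> real"])
  show "integrable lborel (indicator S :: real \<Rightarrow> real)" using assms(3,4) by simp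
  show "(\<lambda>t. indicator S t * G t) \<in> borel_measurable lborel" using assms(1,3) by measurable
  show "AE x in lborel. norm (indicator S x * G x) \<le> norm (indicator S x :: real)"
    using assms(2) by (auto split: split_indicator)
qed

lemma integrable_indicator_interval:
  "integrable lborel (indicator {c..d} :: real \<Rightarrow> real)"
  "integrable lborel (indicator {c<..d} :: real \<Rightarrow> real)"
  by (auto intro!: integrable_real_indicator emeasure_bounded_finite)

context
  fixes G :: "real \<Rightarrow> real" and a b :: real
  assumes G_meas: "G \<in> borel_measurable lborel" and G_bounds: "\<And>t. 0 \<le> G t \<and> G t \<le> 1"
    and G_outside: "\<And>t. t \<notin> {a<..b} \<Longrightarrow> G t = 0"
    and G_mono: "\<And>t t'. a < t \<Longrightarrow> t \<le> t' \<Longrightarrow> t' \<le> b \<Longrightarrow> G t \<le> G t'"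
    and b_pos: "0 < b"
begin

lemma integrable_Icc_mult: "integrable lborel (\<lambda>t. indicator {c..d} t * G t)"
  by (intro integrable_indicator_mult_bounded[OF G_meas G_bounds] emeasure_bounded_finite) auto

lemma integrable_Ioc_mult: "integrable lborel (\<lambda>t. indicator {c<..d} t * G t)"
  by (intro integrable_indicator_mult_bounded[OF G_meas G_bounds] emeasure_bounded_finite) auto

lemma running_integral_eq_after: "b \<le> s \<Longrightarrow> running_integral G s = running_integral G b"
  unfolding running_integral_def using G_outside b_pos
  by (intro Bochner_Integration.integral_cong refl) (auto split: split_indicator simp: not_le)

lemma running_integral_nonneg: "0 \<le> running_integral G s"
  unfolding running_integral_def using G_bounds
  by (intro integral_nonneg_AE) (auto split: split_indicator)

lemma running_integral_le: "running_integral G b \<le> b"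
proof -
  have "running_integral G b \<le> (\<integral>t. indicator {0..b} t \<partial>lborel)"
    unfolding running_integral_def using G_bounds
    by (intro integral_mono integrable_Icc_mult integrable_indicator_interval)
      (auto split: split_indicator)
  then show ?thesis using b_pos by simp
qed

lemma running_integral_split:
  assumes "0 \<le> s" "s \<le> b"
  shows "running_integral G b = running_integral G s + (\<integral>t. indicator {s<..b} t * G t \<partial>lborel)"
proof -
  have "indicator {0..b} t * G t = indicator {0..s} t * G t + indicator {s<..b} t * G t" for t
    using assms by (auto split: split_indicator)
  then show ?thesis unfolding running_integral_def using integrable_Icc_mult integrable_Ioc_mult
    by simp
qed

lemma running_integral_ge:
  assumes "0 \<le> s" "s \<le> b"
  shows "running_integral G b - (b - s) \<le> running_integral G s"
proof -
  have "(\<integral>t. indicator {s<..b} t * G t \<partial>lborel) \<le> (\<integral>t. indicator {s<..b} t \<partial>lborel)"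
    using G_bounds
    by (intro integral_mono integrable_Ioc_mult integrable_indicator_interval)
      (auto split: split_indicator)
  then show ?thesis using running_integral_split[OF assms] assms by simp
qed

lemma running_integral_le_mult:
  assumes "0 \<le> s" "s \<le> b"
  shows "running_integral G s \<le> s * G s"
proof -
  have "indicator {0..s} x * G x \<le> indicator {0..s} x * G s" for x
    using G_mono[of x s] G_outside[of x] G_bounds[of s] assms
    by (cases "a < x") (auto split: split_indicator)
  then have "running_integral G s \<le> (\<integral>t. indicator {0..s} t * G s \<partial>lborel)"
    unfolding running_integral_def
    by (intro integral_mono integrable_Icc_mult) (auto simp: integrable_indicator_interval)
  then show ?thesis using assms by (simp add: mult.commute)
qed

lemma integral_tail_ge:
  assumes "s \<le> b"
  shows "(b - s) * G s \<le> (\<integral>t. indicator {s<..b} t * G t \<partial>lborel)"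
proof -
  have "indicator {s<..b} x * G s \<le> indicator {s<..b} x * G x" for x
    using G_mono[of s x] G_outside[of s] G_bounds[of x] assms
    by (cases "a < s") (auto split: split_indicator)
  then have "(\<integral>t. indicator {s<..b} t * G s \<partial>lborel) \<le> (\<integral>t. indicator {s<..b} t * G t \<partial>lborel)"
    by (intro integral_mono integrable_Ioc_mult) (auto simp: integrable_indicator_interval)
  then show ?thesis using assms by (simp add: mult.commute)
qed

text \<open>On \<open>[0, s]\<close> the integrand is at most \<open>G s\<close>, on \<open>(s, b]\<close> at least \<open>G s\<close>.\<close>
lemma running_average_le:
  assumes s: "0 < s"
  shows "running_integral G s / s \<le> running_integral G b / b"
proof (cases "b \<le> s")
  case True
  then show ?thesis
    using running_integral_eq_after[OF True] running_integral_nonneg[of b] s b_pos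
    by (simp add: divide_left_mono)
next
  case False
  then have sb: "0 \<le> s" "s \<le> b" using s by auto
  have "(b - s) * running_integral G s \<le> (b - s) * (s * G s)"
    using running_integral_le_mult[OF sb] sb by (intro mult_left_mono) auto
  moreover have "s * ((b - s) * G s) \<le> s * (running_integral G b - running_integral G s)"
    using integral_tail_ge[OF sb(2)] running_integral_split[OF sb] s by (intro mult_left_mono) auto
  ultimately have "b * running_integral G s \<le> s * running_integral G b"
    by (simp add: algebra_simps)
  then show ?thesis using s b_pos by (simp add: divide_le_eq le_divide_eq mult.commute)
qed

end

lemma SUP_sqrt_eq:
  fixes f :: "'a \<Rightarrow> real"
  assumes nonneg: "\<And>x. 0 \<le> f x" and le: "\<And>x. f x \<le> M"
    and approx: "\<And>e. 0 < e \<Longrightarrow> \<exists>x. M - e \<le> f x"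
  shows "(SUP x. sqrt (f x)) = sqrt M"
proof (rule cSup_eq_non_empty)
  fix y assume ub: "\<And>z. z \<in> range (\<lambda>x. sqrt (f x)) \<Longrightarrow> z \<le> y"
  have y: "0 \<le> y" using order.trans[OF real_sqrt_ge_zero[OF nonneg] ub[OF rangeI]] .
  have sq_le: "f x \<le> y\<^sup>2" for x
    using power_mono[OF ub[OF rangeI, of x] real_sqrt_ge_zero[OF nonneg], of 2] nonneg[of x] by simp
  have "M \<le> y\<^sup>2"
  proof (rule field_le_epsilon)
    fix e :: real assume "0 < e"
    then obtain x where "M - e \<le> f x" using approx by blast
    then show "M \<le> y\<^sup>2 + e" using sq_le[of x] by simp
  qed
  then show "sqrt M \<le> y" using y real_sqrt_le_mono by fastforce
qed (use le in auto)

section \<open>The stepping-out and shrinkage kernel\<close>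

lemma lvl_antimono: "t \<le> t' \<Longrightarrow> lvl \<rho> t' \<subseteq> lvl \<rho> t"
  unfolding lvl_def by auto

lemma sets_lvl:
  assumes "\<rho> \<in> borel_measurable lborel"
  shows "lvl \<rho> t \<in> sets lborel"
proof -
  have "{x \<in> space lborel. t \<le> \<rho> x} \<in> sets lborel" using assms by measurable
  then show ?thesis unfolding lvl_def by simp
qed

definition step_fun :: "real set \<Rightarrow> real set \<Rightarrow> real \<Rightarrow> real \<Rightarrow> real \<Rightarrow> real \<Rightarrow> real" where
  "step_fun B1 B2 c e1 e2 x = c + indicator B1 x * e1 + indicator B2 x * e2"

locale stepping_out =
  fixes w :: real and \<rho> :: "real \<Rightarrow> real" and t1 t2 :: real
    and K1 K2 :: "real \<Rightarrow> real set"
  assumes w_pos: "0 < w"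
    and rho_nonneg: "\<And>x. 0 \<le> \<rho> x"
    and rho_meas: "\<rho> \<in> borel_measurable lborel"
    and rho_int_pos: "0 < (\<integral>x. \<rho> x \<partial>lborel)"
    and rho_bdd: "bdd_above (range \<rho>)"
    and lvl_meas: "\<And>t. 0 < t \<Longrightarrow> t < rho_max \<rho> \<Longrightarrow>
                     0 < emeasure lborel (lvl \<rho> t) \<and> emeasure lborel (lvl \<rho> t) < \<infinity>"
    and Rw: "in_Rw w \<rho> t1 t2 K1 K2"
    and Ki_pos: "\<And>t. t \<in> {t1<..t2} \<Longrightarrow>
                   0 < emeasure lborel (K1 t) \<and> 0 < emeasure lborel (K2 t)"
    and t2_pos: "0 < t2"
begin

abbreviation "R \<equiv> rho_max \<rho>"
abbreviation "K \<equiv> lvl \<rho>"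
abbreviation "mu t \<equiv> measure lborel (lvl \<rho> t)"
abbreviation "\<delta> \<equiv> delta t1 t2 K1 K2"
abbreviation "\<gamma> \<equiv> gamma w \<rho> t1 t2 K1 K2"
abbreviation "H \<equiv> Hop w \<rho> t1 t2 K1 K2"
abbreviation "opnorm \<equiv> opnorm_diff w \<rho> t1 t2 K1 K2"

lemma t1_t2: "0 \<le> t1" "t1 \<le> t2" "t2 \<le> R"
  using Rw unfolding in_Rw_def by auto

lemma lvl_interval_outside: "t \<in> {0..t1} \<union> {t2<..R} \<Longrightarrow> is_interval (K t)"
  using Rw unfolding in_Rw_def by auto

lemma pieces:
  assumes "t \<in> {t1<..t2}"
  shows "is_interval (K1 t)" "is_interval (K2 t)" "K1 t \<noteq> {}" "K2 t \<noteq> {}"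
    "K1 t \<inter> K2 t = {}" "K t = K1 t \<union> K2 t"
  using Rw assms unfolding in_Rw_def by auto

lemma pieces_antimono:
  assumes "t \<in> {t1<..t2}" "t' \<in> {t1<..t2}" "t \<le> t'"
  shows "K1 t' \<subseteq> K1 t" "K2 t' \<subseteq> K2 t"
proof -
  have step: "\<forall>\<epsilon>>0. t + \<epsilon> \<in> {t1<..t2} \<longrightarrow> K1 (t + \<epsilon>) \<subseteq> K1 t \<and> K2 (t + \<epsilon>) \<subseteq> K2 t"
    using Rw assms(1) unfolding in_Rw_def by blast
  have "K1 t' \<subseteq> K1 t \<and> K2 t' \<subseteq> K2 t"
  proof (cases "t = t'")
    case False
    then have "0 < t' - t" "t + (t' - t) \<in> {t1<..t2}" using assms by auto
    with step have "K1 (t + (t' - t)) \<subseteq> K1 t \<and> K2 (t + (t' - t)) \<subseteq> K2 t" by blast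
    then show ?thesis by simp
  qed simp
  then show "K1 t' \<subseteq> K1 t" "K2 t' \<subseteq> K2 t" by auto
qed

lemma delta_lt_w: "\<delta> t < w"
  using Rw unfolding in_Rw_def by auto

lemma delta_nonneg: "0 \<le> \<delta> t"
  unfolding delta_def using pieces(3,4) by (auto intro: gap_nonneg)

lemma delta_mono:
  assumes "t \<in> {t1<..t2}" "t' \<in> {t1<..t2}" "t \<le> t'"
  shows "\<delta> t \<le> \<delta> t'"
  unfolding delta_def using assms pieces_antimono[OF assms] pieces(3,4)[OF assms(2)]
  by (auto intro: gap_antimono)

lemma sets_K[measurable]: "K t \<in> sets lborel"
  by (rule sets_lvl[OF rho_meas])

lemma rho_le_R: "\<rho> x \<le> R"
  unfolding rho_max_def using rho_bdd by (rule cSup_upper[rotated]) simp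

lemma emeasure_K_finite:
  assumes "0 < t" "t \<le> R"
  shows "emeasure lborel (K t) < \<infinity>"
proof (cases "t < R")
  case True
  then show ?thesis using lvl_meas[of t] assms by blast
next
  case False
  then have "0 < R" using assms by linarith
  then have "emeasure lborel (K (R/2)) < \<infinity>" using lvl_meas by simp
  moreover have "emeasure lborel (K t) \<le> emeasure lborel (K (R/2))"
    using False \<open>0 < R\<close> by (intro emeasure_mono[OF lvl_antimono sets_K]) auto
  ultimately show ?thesis by auto
qed

lemma split_K:
  assumes t: "t \<in> {t1<..t2}"
  shows "pos_fin_split (K t) (K1 t) (K2 t)"
proof -
  have fin: "emeasure lborel (K t) < \<infinity>" using emeasure_K_finite t t1_t2 by simp
  have "emeasure lborel (K1 t) \<le> emeasure lborel (K t)" "emeasure lborel (K2 t) \<le> emeasure lborel (K t)"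
    by (intro emeasure_mono[OF _ sets_K]; use pieces(6)[OF t] in auto)+
  then have "emeasure lborel (K1 t) < \<infinity>" "emeasure lborel (K2 t) < \<infinity>"
    using fin by (simp_all add: le_less_trans)
  then show ?thesis using pieces(5,6)[OF t] Ki_pos[OF t] unfolding pos_fin_split_def by blast
qed

lemma gamma_inside: "t \<in> {t1<..t2} \<Longrightarrow> \<gamma> t = (w - \<delta> t) / w * (mu t / (mu t + \<delta> t))"
  unfolding gamma_def by simp

lemma gamma_bounds:
  assumes t: "t \<in> {t1<..t2}"
  shows "0 \<le> \<gamma> t" "\<gamma> t \<le> 1"
proof -
  have m: "0 < mu t"
    using measure_pos_if_emeasure_pos pos_fin_split_measure(1,2)[OF split_K[OF t]] by blast
  have a: "0 \<le> (w - \<delta> t) / w" "(w - \<delta> t) / w \<le> 1"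
    using less_imp_le[OF delta_lt_w[of t]] delta_nonneg[of t] w_pos by auto
  have b: "0 \<le> mu t / (mu t + \<delta> t)" "mu t / (mu t + \<delta> t) \<le> 1"
    using m delta_nonneg[of t] by auto
  show "0 \<le> \<gamma> t" unfolding gamma_inside[OF t] by (rule mult_nonneg_nonneg[OF a(1) b(1)])
  show "\<gamma> t \<le> 1" using a b gamma_inside[OF t] mult_mono[OF a(2) b(2)] by simp
qed

lemma Hop_inside:
  "t \<in> {t1<..t2} \<Longrightarrow> H t f x = \<gamma> t * mean (K t) f +
     (1 - \<gamma> t) * (indicator (K1 t) x * mean (K1 t) f + indicator (K2 t) x * mean (K2 t) f)"
  unfolding Hop_def by simp

lemma Hop_outside: "t \<notin> {t1<..t2} \<Longrightarrow> H t f = (\<lambda>x. mean (K t) f)"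
  unfolding Hop_def by auto

lemma Hop_measurable: "H t g \<in> borel_measurable lborel"
proof (cases "t \<in> {t1<..t2}")
  case True
  have [measurable]: "K1 t \<in> sets lborel" "K2 t \<in> sets lborel"
    using pieces(1,2)[OF True] by (auto intro: real_interval_borel_measurable)
  show ?thesis unfolding Hop_inside[OF True, abs_def] by measurable
qed (simp add: Hop_outside)

context
  fixes t assumes t: "t \<in> {t1<..t2}"
begin

lemma pos_fin_parts:
  assumes "B \<in> {K t, K1 t, K2 t}"
  shows "0 < emeasure lborel B" "emeasure lborel B < \<infinity>"
  using assms split_K[OF t] pos_fin_split_measure(1,2)[OF split_K[OF t]]
  unfolding pos_fin_split_def by auto

lemma pos_fin_K: "0 < emeasure lborel (K t)" "emeasure lborel (K t) < \<infinity>"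
  using pos_fin_parts[of "K t"] by simp_all

lemma measure_parts_pos: "0 < mu t" "0 < measure lborel (K1 t)" "0 < measure lborel (K2 t)"
  using measure_pos_if_emeasure_pos pos_fin_parts by auto

lemma sets_parts[measurable]: "K1 t \<in> sets lborel" "K2 t \<in> sets lborel"
  using sets_lborel_if_emeasure_pos pos_fin_parts by auto

lemma mu_split: "mu t = measure lborel (K1 t) + measure lborel (K2 t)"
  by (rule pos_fin_split_measure(3)[OF split_K[OF t]])

lemma integral_indicator_K_split:
  fixes g :: "real \<Rightarrow> real"
  assumes "integrable lborel (\<lambda>x. indicator (K1 t) x * g x)"
    and "integrable lborel (\<lambda>x. indicator (K2 t) x * g x)"
  shows "(\<integral>x. indicator (K t) x * g x \<partial>lborel)
    = (\<integral>x. indicator (K1 t) x * g x \<partial>lborel) + (\<integral>x. indicator (K2 t) x * g x \<partial>lborel)"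
proof -
  have "(\<lambda>x. indicator (K t) x * g x)
      = (\<lambda>x. indicator (K1 t) x * g x + indicator (K2 t) x * g x)"
    using pieces(5,6)[OF t] by (intro ext) (auto split: split_indicator)
  then show ?thesis using assms by simp
qed

lemma L2_parts:
  assumes "L2 (unif (K t)) f" and "B \<in> {K t, K1 t, K2 t}"
  shows "L2 (unif B) f"
  using L2_unif_subset[OF _ pos_fin_parts pos_fin_parts assms(1)] assms(2) pieces(6)[OF t] by auto

lemma integrable_parts:
  assumes L: "L2 (unif (K t)) f" and B: "B \<in> {K t, K1 t, K2 t}"
  shows "integrable lborel (\<lambda>x. indicator B x * f x)"
    and "integrable lborel (\<lambda>x. indicator B x * (f x)\<^sup>2)"
proof -
  have fm: "f \<in> borel_measurable lborel" using L unfolding L2_def by simp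
  note LB = L2_parts[OF L B]
  show "integrable lborel (\<lambda>x. indicator B x * f x)"
    using L2_imp_integrable[OF pos_fin_parts[OF B] LB] integrable_unif_iff[OF pos_fin_parts[OF B] fm]
    by simp
  show "integrable lborel (\<lambda>x. indicator B x * (f x)\<^sup>2)"
    using LB fm integrable_unif_iff[OF pos_fin_parts[OF B], of "\<lambda>x. (f x)\<^sup>2"]
    unfolding L2_def by simp
qed

lemma mean_split:
  assumes L: "L2 (unif (K t)) f"
  shows "measure lborel (K1 t) * mean (K1 t) f + measure lborel (K2 t) * mean (K2 t) f
    = mu t * mean (K t) f"
proof -
  have fm: "f \<in> borel_measurable lborel" using L unfolding L2_def by simp
  show ?thesis
    using integral_indicator_K_split[OF integrable_parts(1)[OF L] integrable_parts(1)[OF L]]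
      integral_indicator_mult_eq_mean[OF pos_fin_parts fm]
    by auto
qed

lemma Hop_cong:
  assumes g: "g \<in> borel_measurable lborel" and g': "g' \<in> borel_measurable lborel"
    and eq: "\<And>x. x \<in> K t \<Longrightarrow> g x = g' x"
  shows "H t g = H t g'"
proof -
  have "mean B g = mean B g'" if B: "B \<in> {K t, K1 t, K2 t}" for B
  proof -
    have "(\<lambda>x. indicator B x * g x) = (\<lambda>x. indicator B x * g' x)"
      using B eq pieces(6)[OF t] by (auto split: split_indicator)
    then show ?thesis
      unfolding integral_unif[OF pos_fin_parts[OF B] g] integral_unif[OF pos_fin_parts[OF B] g'] by simp
  qed
  then show ?thesis by (intro ext) (simp add: Hop_inside[OF t])
qed

lemma step_fun_measurable: "step_fun (K1 t) (K2 t) c e1 e2 \<in> borel_measurable lborel"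
  unfolding step_fun_def[abs_def] by measurable

lemma mean_step_fun:
  "mean (K t) (step_fun (K1 t) (K2 t) c e1 e2) =
     c + (measure lborel (K1 t) * e1 + measure lborel (K2 t) * e2) / mu t"
  "mean (K1 t) (step_fun (K1 t) (K2 t) c e1 e2) = c + e1"
  "mean (K2 t) (step_fun (K1 t) (K2 t) c e1 e2) = c + e2"
proof -
  have i: "integrable lborel (indicator B :: real \<Rightarrow> real)" if "B \<in> {K t, K1 t, K2 t}" for B
    using integrable_real_indicator[OF sets_lborel_if_emeasure_pos pos_fin_parts(2)[OF that]]
      pos_fin_parts(1)[OF that] by simp
  have "indicator (K t) x * step_fun (K1 t) (K2 t) c e1 e2 x =
      c * indicator (K t) x + e1 * indicator (K1 t) x + e2 * indicator (K2 t) x"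
    and "indicator (K1 t) x * step_fun (K1 t) (K2 t) c e1 e2 x = (c + e1) * indicator (K1 t) x"
    and "indicator (K2 t) x * step_fun (K1 t) (K2 t) c e1 e2 x = (c + e2) * indicator (K2 t) x" for x
    unfolding step_fun_def using pieces(5,6)[OF t] by (auto split: split_indicator)
  then show
    "mean (K t) (step_fun (K1 t) (K2 t) c e1 e2) =
       c + (measure lborel (K1 t) * e1 + measure lborel (K2 t) * e2) / mu t"
    "mean (K1 t) (step_fun (K1 t) (K2 t) c e1 e2) = c + e1"
    "mean (K2 t) (step_fun (K1 t) (K2 t) c e1 e2) = c + e2"
    using integral_unif[OF pos_fin_parts step_fun_measurable] i measure_parts_pos
    by (simp_all add: field_simps)
qed

lemma indicator_parts_sum: "x \<in> K t \<Longrightarrow> indicator (K1 t) x + indicator (K2 t) x = (1::real)"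
  using pieces(5,6)[OF t] by (auto split: split_indicator)

lemma Hop_step_fun:
  assumes zero: "measure lborel (K1 t) * e1 + measure lborel (K2 t) * e2 = 0" and x: "x \<in> K t"
  shows "H t (step_fun (K1 t) (K2 t) c e1 e2) x
    = step_fun (K1 t) (K2 t) c ((1 - \<gamma> t) * e1) ((1 - \<gamma> t) * e2) x"
proof -
  have "H t (step_fun (K1 t) (K2 t) c e1 e2) x
      = \<gamma> t * c + (1 - \<gamma> t) * (indicator (K1 t) x * (c + e1) + indicator (K2 t) x * (c + e2))"
    unfolding Hop_inside[OF t] mean_step_fun zero by simp
  also have "\<dots> = \<gamma> t * c + (1 - \<gamma> t) * (c * (indicator (K1 t) x + indicator (K2 t) x)
      + indicator (K1 t) x * e1 + indicator (K2 t) x * e2)"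
    by (simp add: algebra_simps)
  also have "\<dots> = step_fun (K1 t) (K2 t) c ((1 - \<gamma> t) * e1) ((1 - \<gamma> t) * e2) x"
    unfolding indicator_parts_sum[OF x] step_fun_def by (simp add: algebra_simps)
  finally show ?thesis .
qed

lemma Hop_power:
  assumes L: "L2 (unif (K t)) f" and x: "x \<in> K t"
  shows "(H t ^^ Suc n) f x = step_fun (K1 t) (K2 t) (mean (K t) f)
     ((1 - \<gamma> t) ^ Suc n * (mean (K1 t) f - mean (K t) f))
     ((1 - \<gamma> t) ^ Suc n * (mean (K2 t) f - mean (K t) f)) x"
  using x
proof (induction n arbitrary: x)
  case 0
  have "(H t ^^ Suc 0) f x = \<gamma> t * mean (K t) f
      + (1 - \<gamma> t) * (indicator (K1 t) x * mean (K1 t) f + indicator (K2 t) x * mean (K2 t) f)"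
    using Hop_inside[OF t] by simp
  also have "\<dots> = \<gamma> t * mean (K t) f + (1 - \<gamma> t) * (mean (K t) f * (indicator (K1 t) x + indicator (K2 t) x)
      + indicator (K1 t) x * (mean (K1 t) f - mean (K t) f)
      + indicator (K2 t) x * (mean (K2 t) f - mean (K t) f))"
    by (simp add: algebra_simps)
  finally show ?case unfolding indicator_parts_sum[OF 0] step_fun_def by (simp add: algebra_simps)
next
  case (Suc n)
  define e1 where "e1 = (1 - \<gamma> t) ^ Suc n * (mean (K1 t) f - mean (K t) f)"
  define e2 where "e2 = (1 - \<gamma> t) ^ Suc n * (mean (K2 t) f - mean (K t) f)"
  have "(H t ^^ Suc n) f \<in> borel_measurable lborel"
    using Hop_measurable by simp
  then have eq: "H t ((H t ^^ Suc n) f) = H t (step_fun (K1 t) (K2 t) (mean (K t) f) e1 e2)"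
    by (rule Hop_cong[OF _ step_fun_measurable]) (use Suc.IH in \<open>simp add: e1_def e2_def\<close>)
  have "measure lborel (K1 t) * e1 + measure lborel (K2 t) * e2 =
      (1 - \<gamma> t) ^ Suc n * ((measure lborel (K1 t) * mean (K1 t) f
        + measure lborel (K2 t) * mean (K2 t) f)
        - (measure lborel (K1 t) + measure lborel (K2 t)) * mean (K t) f)"
    unfolding e1_def e2_def by (simp add: algebra_simps)
  then have zero: "measure lborel (K1 t) * e1 + measure lborel (K2 t) * e2 = 0"
    unfolding mean_split[OF L] mu_split[symmetric] by simp
  have "(H t ^^ Suc (Suc n)) f x = H t ((H t ^^ Suc n) f) x" by simp
  also have "\<dots> = step_fun (K1 t) (K2 t) (mean (K t) f) ((1 - \<gamma> t) * e1) ((1 - \<gamma> t) * e2) x"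
    unfolding eq by (rule Hop_step_fun[OF zero Suc.prems])
  finally show ?case unfolding e1_def e2_def by (simp add: mult.assoc)
qed

text \<open>The squared norm of \<open>P t f - U t f\<close>.\<close>
abbreviation between_var :: "(real \<Rightarrow> real) \<Rightarrow> real" where
  "between_var f \<equiv> (measure lborel (K1 t) * (mean (K1 t) f - mean (K t) f)\<^sup>2
     + measure lborel (K2 t) * (mean (K2 t) f - mean (K t) f)\<^sup>2) / mu t"

lemma integral_Hop_power_centered_sq:
  assumes L: "L2 (unif (K t)) f"
  shows "(\<integral>x. ((H t ^^ Suc n) f x - mean (K t) f)\<^sup>2 \<partial>unif (K t))
    = (1 - \<gamma> t) ^ (2 * Suc n) * between_var f"
proof -
  define g where "g = (H t ^^ Suc n) f"
  define a where "a = (1 - \<gamma> t) ^ Suc n"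
  define d1 where "d1 = mean (K1 t) f - mean (K t) f"
  define d2 where "d2 = mean (K2 t) f - mean (K t) f"
  have "g \<in> borel_measurable lborel" unfolding g_def using Hop_measurable by simp
  then have m: "(\<lambda>x. (g x - mean (K t) f)\<^sup>2) \<in> borel_measurable lborel" by measurable
  have i: "integrable lborel (indicator (K1 t) :: real \<Rightarrow> real)"
    "integrable lborel (indicator (K2 t) :: real \<Rightarrow> real)"
    using sets_parts pos_fin_parts(2)[of "K1 t"] pos_fin_parts(2)[of "K2 t"] by simp_all
  have "indicator (K t) x * (g x - mean (K t) f)\<^sup>2
      = (a * d1)\<^sup>2 * indicator (K1 t) x + (a * d2)\<^sup>2 * indicator (K2 t) x" for x
  proof (cases "x \<in> K t")
    case True
    then show ?thesis
      unfolding g_def Hop_power[OF L True] step_fun_def a_def[symmetric] d1_def[symmetric]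
        d2_def[symmetric]
      using pieces(5,6)[OF t] by (auto split: split_indicator)
  next
    case False
    then show ?thesis using pieces(6)[OF t] by (auto split: split_indicator)
  qed
  then have "(\<integral>x. indicator (K t) x * (g x - mean (K t) f)\<^sup>2 \<partial>lborel)
      = (a * d1)\<^sup>2 * measure lborel (K1 t) + (a * d2)\<^sup>2 * measure lborel (K2 t)"
    using i by simp
  then have "(\<integral>x. (g x - mean (K t) f)\<^sup>2 \<partial>unif (K t))
      = ((a * d1)\<^sup>2 * measure lborel (K1 t) + (a * d2)\<^sup>2 * measure lborel (K2 t)) / mu t"
    unfolding integral_unif[OF pos_fin_K m] by simp
  also have "\<dots> = a\<^sup>2 * ((measure lborel (K1 t) * d1\<^sup>2 + measure lborel (K2 t) * d2\<^sup>2) / mu t)"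
    by (simp add: power_mult_distrib algebra_simps)
  moreover have "a\<^sup>2 = (1 - \<gamma> t) ^ (2 * Suc n)" unfolding a_def by (rule power_even_eq[symmetric])
  ultimately show ?thesis unfolding g_def[symmetric] d1_def[symmetric] d2_def[symmetric] by simp
qed

lemma between_var_le:
  assumes L: "L2 (unif (K t)) f"
  shows "between_var f \<le> (\<integral>x. (f x)\<^sup>2 \<partial>unif (K t))"
proof -
  have fm: "f \<in> borel_measurable lborel" using L unfolding L2_def by simp
  define m1 m2 where "m1 = measure lborel (K1 t)" and "m2 = measure lborel (K2 t)"
  define c c1 c2 where "c = mean (K t) f" and "c1 = mean (K1 t) f" and "c2 = mean (K2 t) f"
  have sq: "(\<integral>x. indicator B x * (f x)\<^sup>2 \<partial>lborel) = measure lborel B * mean B (\<lambda>x. (f x)\<^sup>2)"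
    if "B \<in> {K t, K1 t, K2 t}" for B
    using integral_indicator_mult_eq_mean[OF pos_fin_parts[OF that] borel_measurable_power[OF fm]] .
  have jensen: "(mean B f)\<^sup>2 \<le> mean B (\<lambda>x. (f x)\<^sup>2)" if "B \<in> {K t, K1 t, K2 t}" for B
    by (rule mean_sq_le[OF pos_fin_parts[OF that] L2_parts[OF L that]])
  have "m1 * (c1 - c)\<^sup>2 + m2 * (c2 - c)\<^sup>2 = m1 * c1\<^sup>2 + m2 * c2\<^sup>2 - 2 * c * (m1 * c1 + m2 * c2) + (m1 + m2) * c\<^sup>2"
    by (simp add: power2_diff algebra_simps)
  also have "\<dots> = m1 * c1\<^sup>2 + m2 * c2\<^sup>2 - mu t * c\<^sup>2"
    using mean_split[OF L] mu_split unfolding m1_def m2_def c_def c1_def c2_def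
    by (simp add: power2_eq_square)
  also have "\<dots> \<le> m1 * mean (K1 t) (\<lambda>x. (f x)\<^sup>2) + m2 * mean (K2 t) (\<lambda>x. (f x)\<^sup>2)"
  proof -
    have "m1 * c1\<^sup>2 \<le> m1 * mean (K1 t) (\<lambda>x. (f x)\<^sup>2)" "m2 * c2\<^sup>2 \<le> m2 * mean (K2 t) (\<lambda>x. (f x)\<^sup>2)"
      using jensen[of "K1 t"] jensen[of "K2 t"] measure_parts_pos
      unfolding m1_def m2_def c1_def c2_def by (simp_all add: mult_left_mono)
    moreover have "0 \<le> mu t * c\<^sup>2" using measure_parts_pos by simp
    ultimately show ?thesis by linarith
  qed
  also have "\<dots> = mu t * mean (K t) (\<lambda>x. (f x)\<^sup>2)"
    using integral_indicator_K_split[OF integrable_parts(2)[OF L] integrable_parts(2)[OF L]] sq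
    unfolding m1_def m2_def by simp
  finally show ?thesis
    using measure_parts_pos(1) unfolding m1_def m2_def c_def c1_def c2_def
    by (simp add: pos_divide_le_eq mult.commute)
qed

lemma integral_Hop_mult:
  assumes L: "L2 (unif (K t)) f"
  shows "(\<integral>x. H t f x * f x \<partial>unif (K t)) = \<gamma> t * (mean (K t) f)\<^sup>2
    + (1 - \<gamma> t) * (measure lborel (K1 t) * (mean (K1 t) f)\<^sup>2
                  + measure lborel (K2 t) * (mean (K2 t) f)\<^sup>2) / mu t"
proof -
  have fm: "f \<in> borel_measurable lborel" using L unfolding L2_def by simp
  have Hm: "(\<lambda>x. H t f x * f x) \<in> borel_measurable lborel" using Hop_measurable fm by measurable
  have int: "(\<integral>x. indicator B x * f x \<partial>lborel) = measure lborel B * mean B f"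
    and i: "integrable lborel (\<lambda>x. indicator B x * f x)" if "B \<in> {K t, K1 t, K2 t}" for B
    using integral_indicator_mult_eq_mean[OF pos_fin_parts[OF that] fm] integrable_parts(1)[OF L that]
    by auto
  have "indicator (K t) x * (H t f x * f x)
      = \<gamma> t * mean (K t) f * (indicator (K t) x * f x)
        + (1 - \<gamma> t) * (mean (K1 t) f * (indicator (K1 t) x * f x)
                      + mean (K2 t) f * (indicator (K2 t) x * f x))" for x
    using pieces(5,6)[OF t] by (auto simp: Hop_inside[OF t] algebra_simps split: split_indicator)
  then have "(\<integral>x. indicator (K t) x * (H t f x * f x) \<partial>lborel)
      = \<gamma> t * mean (K t) f * (mu t * mean (K t) f)
        + (1 - \<gamma> t) * (mean (K1 t) f * (measure lborel (K1 t) * mean (K1 t) f)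
                      + mean (K2 t) f * (measure lborel (K2 t) * mean (K2 t) f))"
    using i[of "K t"] i[of "K1 t"] i[of "K2 t"] int[of "K t"] int[of "K1 t"] int[of "K2 t"] by simp
  then show ?thesis
    unfolding integral_unif[OF pos_fin_K Hm]
    using measure_parts_pos by (simp add: field_simps power2_eq_square)
qed

lemma opnorm_inside: "opnorm k t = (1 - \<gamma> t) ^ k"
proof (cases k)
  case 0
  then show ?thesis unfolding opnorm_diff_def using Sup_l2norm_centered[OF split_K[OF t]] by simp
next
  case (Suc n)
  define S where "S = {l2norm (unif (K t)) (\<lambda>x. (H t ^^ k) f x - mean (K t) f) | f.
     L2 (unif (K t)) f \<and> l2norm (unif (K t)) f \<le> 1}"
  have g: "0 \<le> 1 - \<gamma> t" using gamma_bounds[OF t] by simp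
  have norm_eq: "l2norm (unif (K t)) (\<lambda>x. (H t ^^ k) f x - mean (K t) f)
      = (1 - \<gamma> t) ^ k * sqrt (between_var f)" if "L2 (unif (K t)) f" for f
    unfolding l2norm_def Suc integral_Hop_power_centered_sq[OF that] power_even_eq real_sqrt_mult
    using g by simp
  have "z \<le> (1 - \<gamma> t) ^ k" if "z \<in> S" for z
  proof -
    obtain f where z: "z = l2norm (unif (K t)) (\<lambda>x. (H t ^^ k) f x - mean (K t) f)"
      and L: "L2 (unif (K t)) f" and le1: "l2norm (unif (K t)) f \<le> 1"
      using \<open>z \<in> S\<close> unfolding S_def by auto
    have "between_var f \<le> 1"
      using between_var_le[OF L] le1 unfolding l2norm_def by simp
    then have "sqrt (between_var f) \<le> 1" by simp
    then show ?thesis unfolding z norm_eq[OF L] using g by (simp add: mult_left_le)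
  qed
  moreover have "(1 - \<gamma> t) ^ k \<in> S"
  proof -
    obtain f where L: "L2 (unif (K t)) f" and n1: "l2norm (unif (K t)) f = 1"
      and c: "mean (K t) f = 0"
      and c1: "mean (K1 t) f = sqrt (measure lborel (K2 t)) / sqrt (measure lborel (K1 t))"
      and c2: "mean (K2 t) f = - (sqrt (measure lborel (K1 t)) / sqrt (measure lborel (K2 t)))"
      using split_test_function[OF split_K[OF t]] by blast
    have "measure lborel (K1 t) * (mean (K1 t) f)\<^sup>2 = measure lborel (K2 t)"
      "measure lborel (K2 t) * (mean (K2 t) f)\<^sup>2 = measure lborel (K1 t)"
      unfolding c1 c2 using measure_parts_pos by (simp_all add: power_divide)
    then have "between_var f = 1" unfolding c mu_split using measure_parts_pos by simp
    then show ?thesis unfolding S_def using norm_eq[OF L] n1 L by force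
  qed
  ultimately show ?thesis unfolding opnorm_diff_def S_def[symmetric] by (intro cSup_eq_maximum)
qed

end

lemma Hop_psd:
  assumes L: "L2 (unif (K t)) f"
  shows "0 \<le> (\<integral>x. H t f x * f x \<partial>unif (K t))"
proof (cases "t \<in> {t1<..t2}")
  case True
  then show ?thesis
    unfolding integral_Hop_mult[OF True L] using gamma_bounds[OF True] measure_parts_pos[OF True]
    by (intro add_nonneg_nonneg mult_nonneg_nonneg divide_nonneg_pos) auto
next
  case False
  then show ?thesis by (simp add: Hop_outside)
qed

lemma opnorm_outside:
  assumes t: "t \<notin> {t1<..t2}" and "0 < t" "t < R"
  shows "opnorm k t = 0 ^ k"
proof (cases k)
  case 0
  have "is_interval (K t)" using lvl_interval_outside t assms(2,3) by auto
  then obtain B1 B2 where "pos_fin_split (K t) B1 B2"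
    using interval_pos_fin_split lvl_meas assms(2,3) by blast
  then show ?thesis unfolding opnorm_diff_def 0 using Sup_l2norm_centered by simp
next
  case (Suc n)
  have pK: "0 < emeasure lborel (K t)" "emeasure lborel (K t) < \<infinity>" using lvl_meas assms(2,3) by auto
  have prob: "measure (unif (K t)) (space (unif (K t))) = 1"
    using integral_unif_const[OF pK, of 1] by simp
  have "(H t ^^ Suc m) f = (\<lambda>x. mean (K t) f)" for m f
    by (induction m) (simp_all add: Hop_outside[OF t] prob)
  moreover have "L2 (unif (K t)) (\<lambda>x. 0)" unfolding L2_def by simp
  then have "{0 | f. L2 (unif (K t)) f \<and> l2norm (unif (K t)) f \<le> 1} = {0::real}"
    unfolding l2norm_def by auto
  ultimately show ?thesis unfolding opnorm_diff_def Suc l2norm_def by simp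
qed

lemma opnorm_zero: "0 < t \<Longrightarrow> t < R \<Longrightarrow> opnorm 0 t = 1"
  using opnorm_inside opnorm_outside by (cases "t \<in> {t1<..t2}") auto

lemma gamma_antimono:
  assumes "t1 < t" "t \<le> t'" "t' \<le> t2"
  shows "\<gamma> t' \<le> \<gamma> t"
proof -
  have tt: "t \<in> {t1<..t2}" "t' \<in> {t1<..t2}" using assms by auto
  define d d' m m' where "d = \<delta> t" and "d' = \<delta> t'" and "m = mu t" and "m' = mu t'"
  have dd: "0 \<le> d" "d \<le> d'" "d' < w" unfolding d_def d'_def
    using delta_nonneg delta_mono[OF tt assms(2)] delta_lt_w by auto
  have m'_pos: "0 < m'" unfolding m'_def using measure_parts_pos(1)[OF tt(2)] .
  have "m' \<le> m" unfolding m_def m'_def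
    using pos_fin_split_measure(2)[OF split_K[OF tt(1)]] lvl_antimono[OF assms(2)]
    by (intro measure_mono_fmeasurable) (auto simp: fmeasurable_def sets_K[simplified])
  then have "m' * (m + d) \<le> m * (m' + d')"
    using dd m'_pos mult_mono[of m' m d d'] by (simp add: algebra_simps)
  moreover have pos: "0 < m' + d'" "0 < m + d" using m'_pos dd \<open>m' \<le> m\<close> by auto
  ultimately have "m' / (m' + d') \<le> m / (m + d)"
    unfolding frac_le_eq[OF pos[THEN less_imp_neq, THEN not_sym]]
    by (intro divide_nonpos_pos mult_pos_pos) (auto simp: algebra_simps)
  moreover have "(w - d') / w \<le> (w - d) / w" using dd w_pos by (simp add: divide_right_mono)
  ultimately show ?thesis
    unfolding gamma_inside[OF tt(1)] gamma_inside[OF tt(2)] d_def[symmetric] d'_def[symmetric]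
      m_def[symmetric] m'_def[symmetric]
    using dd m'_pos w_pos by (intro mult_mono) auto
qed

definition contraction :: "nat \<Rightarrow> real \<Rightarrow> real" where
  "contraction k t = (if t \<in> {t1<..t2} then (1 - \<gamma> t) ^ (2 * k) else 0)"

lemma contraction_bounds: "0 \<le> contraction k t \<and> contraction k t \<le> 1"
  unfolding contraction_def using gamma_bounds by (auto intro: power_le_one)

lemma contraction_outside: "t \<notin> {t1<..t2} \<Longrightarrow> contraction k t = 0"
  unfolding contraction_def by auto

lemma contraction_mono: "t1 < t \<Longrightarrow> t \<le> t' \<Longrightarrow> t' \<le> t2 \<Longrightarrow> contraction k t \<le> contraction k t'"
  unfolding contraction_def using gamma_antimono[of t t'] gamma_bounds[of t] gamma_bounds[of t']
  by (auto intro!: power_mono)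

lemma contraction_measurable: "contraction k \<in> borel_measurable lborel"
proof -
  have "contraction k \<in> borel_measurable borel"
    by (rule borel_measurable_piecewise_mono[of "{{t1<..t2}, - {t1<..t2}}"])
      (auto simp: mono_on_def contraction_outside intro: contraction_mono)
  then show ?thesis by simp
qed

lemmas contraction_profile =
  contraction_measurable contraction_bounds contraction_outside contraction_mono t2_pos

lemma running_integral_contraction_nonneg: "0 \<le> running_integral (contraction k) s"
  using running_integral_nonneg[OF contraction_profile] by blast

lemma running_integral_contraction_le: "running_integral (contraction k) t2 \<le> t2"
  using running_integral_le[OF contraction_profile] by blast

lemma running_integral_contraction_eq_after:
  "t2 \<le> s \<Longrightarrow> running_integral (contraction k) s = running_integral (contraction k) t2"
  using running_integral_eq_after[OF contraction_profile] by blast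

lemma running_integral_contraction_ge:
  "0 \<le> s \<Longrightarrow> s \<le> t2 \<Longrightarrow> running_integral (contraction k) t2 - (t2 - s) \<le> running_integral (contraction k) s"
  using running_integral_ge[OF contraction_profile] by blast

lemma running_average_contraction_le:
  "0 < s \<Longrightarrow> running_integral (contraction k) s / s \<le> running_integral (contraction k) t2 / t2"
  using running_average_le[OF contraction_profile] by blast

lemma opnorm_sq: "0 < t \<Longrightarrow> t < R \<Longrightarrow> 0 < k \<Longrightarrow> (opnorm k t)\<^sup>2 = contraction k t"
  using opnorm_inside opnorm_outside unfolding contraction_def
  by (cases "t \<in> {t1<..t2}") (auto simp: power_mult[symmetric] mult.commute)

lemma integrand_eq_contraction:
  assumes "0 < t" "t < R" "0 < k"
  shows "(1 - (w - \<delta> t) / w * (mu t / (mu t + \<delta> t))) ^ (2 * k) = contraction k t"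
proof (cases "t \<in> {t1<..t2}")
  case False
  then have "\<delta> t = 0" unfolding delta_def by auto
  moreover have "0 < mu t" using lvl_meas assms(1,2) measure_pos_if_emeasure_pos by blast
  ultimately show ?thesis unfolding contraction_def using False w_pos assms(3) by auto
qed (simp add: contraction_def gamma_inside)

text \<open>The integrands below agree with the contraction profile except possibly at \<open>0\<close> and
  \<open>R\<close>, where the level set may be null or of infinite measure.\<close>
lemma integral_opnorm_sq:
  assumes "0 < k" "s \<le> R"
  shows "(LINT t:{0..s}|lborel. (opnorm k t)\<^sup>2) = running_integral (contraction k) s"
  unfolding set_lebesgue_integral_def running_integral_def
  using opnorm_sq assms
  by (intro integral_discrete_difference[where X="{0, R}"]) (auto split: split_indicator)

lemma integral_opnorm_zero_sq:
  assumes "0 \<le> s" "s \<le> R"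
  shows "(LINT t:{0..s}|lborel. (opnorm 0 t)\<^sup>2) = s"
proof -
  have "(LINT t:{0..s}|lborel. (opnorm 0 t)\<^sup>2) = (\<integral>t. indicator {0..s} t \<partial>lborel)"
    unfolding set_lebesgue_integral_def
    using opnorm_zero assms
    by (intro integral_discrete_difference[where X="{0, R}"]) (auto split: split_indicator)
  then show ?thesis using assms by simp
qed

lemma integral_rhs:
  assumes "0 < k"
  shows "(LINT t:{0..t2}|lborel. (1 - (w - \<delta> t) / w * (mu t / (mu t + \<delta> t))) ^ (2 * k))
    = running_integral (contraction k) t2"
  unfolding set_lebesgue_integral_def running_integral_def
  using integrand_eq_contraction assms t1_t2
  by (intro integral_discrete_difference[where X="{0, R}"]) (auto split: split_indicator)

lemma exists_rho_pos: "\<exists>x. 0 < \<rho> x"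
proof (rule ccontr)
  assume "\<not> ?thesis"
  then have "\<rho> = (\<lambda>x. 0)" using rho_nonneg by (auto intro: antisym simp: not_less)
  then show False using rho_int_pos by simp
qed

lemma lvl_t2_interval:
  assumes d: "0 < d" and far: "\<And>x. d \<le> \<bar>\<rho> x - t2\<bar>" and "t2 < R"
  shows "is_interval (K t2)"
proof -
  define t' where "t' = min (t2 + d/2) R"
  have t': "t2 < t'" "t' \<le> R" unfolding t'_def using assms by auto
  have "K t2 \<subseteq> K t'"
  proof
    fix x assume "x \<in> K t2"
    then have "t2 + d \<le> \<rho> x" using far[of x] unfolding lvl_def by auto
    then show "x \<in> K t'" unfolding lvl_def t'_def using d by simp
  qed
  then have "K t2 = K t'" using lvl_antimono[of t2 t'] t' by auto
  then show ?thesis using lvl_interval_outside[of t'] t' by auto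
qed

lemma contraction_eq_0_if_interval:
  assumes "is_interval (K t2)" "0 < k"
  shows "contraction k t = 0"
proof (cases "t \<in> {t1<..t2}")
  case True
  then have t2: "t2 \<in> {t1<..t2}" by auto
  have "\<delta> t2 = 0"
    unfolding delta_def using gap_eq_0_if_interval[OF pieces(3,4)[OF t2]] assms(1) pieces(6)[OF t2]
    by simp
  then have "\<gamma> t2 = 1" unfolding gamma_inside[OF t2] using measure_parts_pos(1)[OF t2] w_pos by simp
  then have "contraction k t2 = 0" unfolding contraction_def using t2 assms(2) by simp
  then show ?thesis using contraction_mono[of t t2 k] contraction_bounds[of k t] True by simp
qed (rule contraction_outside)

text \<open>A gap around \<open>t2\<close> in the range of \<open>\<rho>\<close> would make \<open>K t2\<close> equal to a later level set,
  which is an interval.\<close>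
lemma rho_values_near_t2:
  assumes "0 < k" "0 < running_integral (contraction k) t2" "0 < d"
  shows "\<exists>x. \<bar>\<rho> x - t2\<bar> < d"
proof (rule ccontr)
  assume "\<not> ?thesis"
  then have far: "d \<le> \<bar>\<rho> x - t2\<bar>" for x by (simp add: not_less)
  show False
  proof (cases "t2 < R")
    case True
    then have "contraction k = (\<lambda>t. 0)"
      using contraction_eq_0_if_interval[OF lvl_t2_interval[OF assms(3) far] assms(1)] by auto
    then show False using assms(2) unfolding running_integral_def by simp
  next
    case False
    then have "t2 - d < Sup (range \<rho>)" using t1_t2 assms(3) unfolding rho_max_def by simp
    then obtain x where "t2 - d < \<rho> x" using less_cSupD[of "range \<rho>"] by blast
    moreover have "\<rho> x \<le> t2" using rho_le_R[of x] t1_t2 False by simp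
    ultimately show False using far[of x] by simp
  qed
qed

lemma running_average_approx:
  assumes k: "0 < k" and e: "0 < e"
  shows "\<exists>x. running_integral (contraction k) t2 / t2 - e
    \<le> running_integral (contraction k) (\<rho> x) / \<rho> x"
proof (cases "running_integral (contraction k) t2 = 0")
  case True
  have "0 \<le> running_integral (contraction k) (\<rho> 0) / \<rho> 0"
    using running_integral_contraction_nonneg rho_nonneg by simp
  then show ?thesis using True e by (intro exI[of _ 0]) simp
next
  case False
  define J where "J = running_integral (contraction k) t2"
  have J: "0 < J" "J \<le> t2"
    using False running_integral_contraction_nonneg running_integral_contraction_le
    unfolding J_def by (auto simp: order_le_less)
  define d where "d = min (e * t2) (t2 / 2)"
  have d: "0 < d" "d \<le> e * t2" "d \<le> t2 / 2" unfolding d_def using e t2_pos by auto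
  obtain x where x: "\<bar>\<rho> x - t2\<bar> < d" using rho_values_near_t2[OF k J(1)[unfolded J_def] d(1)] by blast
  define s where "s = \<rho> x"
  have s: "0 < s" using x d unfolding s_def by simp
  have "J / t2 - e \<le> running_integral (contraction k) s / s"
  proof (cases "t2 \<le> s")
    case True
    have "J * (s - t2) \<le> t2 * (e * t2)"
      using J x d True t2_pos mult_mono[of J t2 "s - t2" "e * t2"] unfolding s_def by simp
    also have "\<dots> \<le> e * t2 * s" using True e t2_pos by (simp add: mult_left_mono)
    finally have "J / t2 - J / s \<le> e" using s t2_pos by (simp add: field_simps)
    then show ?thesis
      using running_integral_contraction_eq_after[OF True] unfolding J_def by simp
  next
    case False
    have "J - (t2 - s) \<le> running_integral (contraction k) s"
      using running_integral_contraction_ge[of s] s False unfolding J_def by simp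
    then have "J - e * t2 \<le> running_integral (contraction k) s"
      using x d False unfolding s_def by simp
    then have "(J - e * t2) / t2 \<le> running_integral (contraction k) s / t2"
      using t2_pos by (simp add: divide_right_mono)
    then have "J / t2 - e \<le> running_integral (contraction k) s / t2"
      using t2_pos by (simp add: diff_divide_distrib)
    also have "\<dots> \<le> running_integral (contraction k) s / s"
      using running_integral_contraction_nonneg s False by (intro divide_left_mono) auto
    finally show ?thesis .
  qed
  then show ?thesis unfolding J_def s_def by blast
qed

lemma beta_zero: "beta w \<rho> t1 t2 K1 K2 0 = 1"
proof -
  \<comment> \<open>where \<open>\<rho> x = 0\<close> the quotient defining \<open>beta\<close> is \<open>0 / 0 = 0\<close>\<close>
  have eq: "(\<lambda>x. sqrt ((LINT t:{0..\<rho> x}|lborel. (opnorm 0 t)\<^sup>2) / \<rho> x))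
      = (\<lambda>x. sqrt (if \<rho> x = 0 then 0 else 1))"
    using integral_opnorm_zero_sq[OF rho_nonneg rho_le_R] by simp
  moreover have "(SUP x. sqrt (if \<rho> x = 0 then 0 else 1)) = sqrt 1"
    using exists_rho_pos by (intro SUP_sqrt_eq) (auto simp: less_eq_real_def)
  ultimately show ?thesis unfolding beta_def eq by simp
qed

lemma beta_pos:
  assumes k: "0 < k"
  shows "beta w \<rho> t1 t2 K1 K2 k = sqrt (running_integral (contraction k) t2 / t2)"
proof -
  have eq: "(\<lambda>x. sqrt ((LINT t:{0..\<rho> x}|lborel. (opnorm k t)\<^sup>2) / \<rho> x))
      = (\<lambda>x. sqrt (running_integral (contraction k) (\<rho> x) / \<rho> x))"
    using integral_opnorm_sq[OF k rho_le_R] by simp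
  moreover have "(SUP x. sqrt (running_integral (contraction k) (\<rho> x) / \<rho> x))
      = sqrt (running_integral (contraction k) t2 / t2)"
  proof (rule SUP_sqrt_eq)
    fix x
    show "0 \<le> running_integral (contraction k) (\<rho> x) / \<rho> x"
      using running_integral_contraction_nonneg rho_nonneg by simp
    show "running_integral (contraction k) (\<rho> x) / \<rho> x \<le> running_integral (contraction k) t2 / t2"
      using running_average_contraction_le[of "\<rho> x"]
        running_integral_contraction_nonneg rho_nonneg[of x] t2_pos
      by (cases "\<rho> x = 0") auto
  qed (rule running_average_approx[OF k])
  ultimately show ?thesis unfolding beta_def eq by simp
qed

end

theorem lemma4p2:
  fixes w :: real and \<rho> :: "real \<Rightarrow> real" and t1 t2 :: real
    and K1 K2 :: "real \<Rightarrow> real set"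
  assumes w_pos: "0 < w"
    and rho_nonneg: "\<And>x. 0 \<le> \<rho> x"
    and rho_meas: "\<rho> \<in> borel_measurable lborel"
    and rho_int: "integrable lborel \<rho>"
    and rho_int_pos: "0 < (\<integral>x. \<rho> x \<partial>lborel)"
    and rho_bdd: "bdd_above (range \<rho>)"
    and lvl_meas: "\<And>t. 0 < t \<Longrightarrow> t < rho_max \<rho> \<Longrightarrow>
                     0 < emeasure lborel (lvl \<rho> t) \<and> emeasure lborel (lvl \<rho> t) < \<infinity>"
    and Rw: "in_Rw w \<rho> t1 t2 K1 K2"
    and Ki_pos: "\<And>t. t \<in> {t1<..t2} \<Longrightarrow>
                   0 < emeasure lborel (K1 t) \<and> 0 < emeasure lborel (K2 t)"
    and t2_pos: "0 < t2"
  shows "(\<forall>t \<in> {0..rho_max \<rho>}. \<forall>f. L2 (unif (lvl \<rho> t)) f \<longrightarrow>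
            0 \<le> (\<integral>x. Hop w \<rho> t1 t2 K1 K2 t f x * f x \<partial>unif (lvl \<rho> t)))
       \<and> (\<forall>k::nat. beta w \<rho> t1 t2 K1 K2 k =
            sqrt (1 / t2 * (LINT t:{0..t2}|lborel.
              (1 - (w - delta t1 t2 K1 K2 t) / w *
                 (measure lborel (lvl \<rho> t) /
                   (measure lborel (lvl \<rho> t) + delta t1 t2 K1 K2 t))) ^ (2 * k))))"
proof -
  interpret stepping_out w \<rho> t1 t2 K1 K2
    using assms by unfold_locales auto
  have "beta w \<rho> t1 t2 K1 K2 k =
      sqrt (1 / t2 * (LINT t:{0..t2}|lborel. (1 - (w - \<delta> t) / w * (mu t / (mu t + \<delta> t))) ^ (2 * k)))"
    for k
  proof (cases "k = 0")
    case True
    then show ?thesis using beta_zero t2_pos by (simp add: set_lebesgue_integral_def)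
  next
    case False
    then show ?thesis using beta_pos integral_rhs by simp
  qed
  then show ?thesis using Hop_psd by blast
qed

end
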